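(* For every $P \in S$ of degree (in $x$) greater than $0$, one has $C_S(P) \cap R = K$.
   Context: Standing conventions: $K$ is a field, $R = K[y]$, $\sigma$ is a $K$-algebra endomorphism of $R$ with $\deg_y(\sigma(y)) > 1$, and $\delta$ is a $K$-linear $\sigma$-derivation of $R$, i.e. $\delta(ab) = \sigma(a)\delta(b) + \delta(a)b$. $S = R[x;\sigma,\delta]$ is the Ore extension (polynomials $\sum r_i x^i$, $r_i\in R$, with $xr = \sigma(r)x + \delta(r)$). Degree means degree in $x$. $C_S(P)$ is the centralizer of $P$ in $S$. *)

theory Defs
  imports "HOL-Computational_Algebra.Polynomial"
begin

text \<open>R = K[y] is the type 'a poly; S = R[x; sigma, delta] is represented by
  'a poly poly (polynomials in x with coefficients in R, written sum r_i x^i,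
  coefficients on the left), with the Ore multiplication defined below.\<close>

definition kalg_endo :: "('a::field poly \<Rightarrow> 'a poly) \<Rightarrow> bool" where
  "kalg_endo \<sigma> \<longleftrightarrow>
     (\<forall>a b. \<sigma> (a + b) = \<sigma> a + \<sigma> b) \<and>
     (\<forall>a b. \<sigma> (a * b) = \<sigma> a * \<sigma> b) \<and>
     \<sigma> 1 = 1 \<and>
     (\<forall>c a. \<sigma> (smult c a) = smult c (\<sigma> a))"

definition sigma_derivation ::
  "('a::field poly \<Rightarrow> 'a poly) \<Rightarrow> ('a poly \<Rightarrow> 'a poly) \<Rightarrow> bool" where
  "sigma_derivation \<sigma> \<delta> \<longleftrightarrow>
     (\<forall>a b. \<delta> (a + b) = \<delta> a + \<delta> b) \<and>
     (\<forall>c a. \<delta> (smult c a) = smult c (\<delta> a)) \<and>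
     (\<forall>a b. \<delta> (a * b) = \<sigma> a * \<delta> b + \<delta> a * b)"

text \<open>Left multiplication by x:  x * (sum r_i x^i) = sum (sigma(r_i) x^(i+1) + delta(r_i) x^i).\<close>
definition ore_x ::
  "('a::field poly \<Rightarrow> 'a poly) \<Rightarrow> ('a poly \<Rightarrow> 'a poly) \<Rightarrow> 'a poly poly \<Rightarrow> 'a poly poly" where
  "ore_x \<sigma> \<delta> Q = pCons 0 (map_poly \<sigma> Q) + map_poly \<delta> Q"

definition ore_mult ::
  "('a::field poly \<Rightarrow> 'a poly) \<Rightarrow> ('a poly \<Rightarrow> 'a poly) \<Rightarrow> 'a poly poly \<Rightarrow> 'a poly poly \<Rightarrow> 'a poly poly" where
  "ore_mult \<sigma> \<delta> P Q = (\<Sum>i\<le>degree P. smult (coeff P i) ((ore_x \<sigma> \<delta> ^^ i) Q))"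

definition ore_centralizer ::
  "('a::field poly \<Rightarrow> 'a poly) \<Rightarrow> ('a poly \<Rightarrow> 'a poly) \<Rightarrow> 'a poly poly \<Rightarrow> 'a poly poly set" where
  "ore_centralizer \<sigma> \<delta> P = {Q. ore_mult \<sigma> \<delta> P Q = ore_mult \<sigma> \<delta> Q P}"

end

theory Submission
  imports Defs
begin

text \<open>Constants of \<open>K\<close> commute with everything in \<open>S\<close>, since \<open>\<sigma>\<close> fixes them and \<open>\<delta>\<close> kills them.
  Conversely, if \<open>r \<in> R\<close> commutes with \<open>P\<close> of degree \<open>n > 0\<close>, comparing the coefficients of
  \<open>x\<^sup>n\<close> in \<open>rP\<close> and \<open>Pr\<close> gives \<open>r p\<^sub>n = p\<^sub>n \<sigma>\<^sup>n(r)\<close>, so \<open>\<sigma>\<^sup>n(r) = r\<close>.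
  But \<open>\<sigma>\<close> is substitution of \<open>\<sigma>(y)\<close> for \<open>y\<close>, so \<open>deg \<sigma>\<^sup>n(r) = deg r \<cdot> (deg \<sigma>(y))\<^sup>n\<close>,
  which forces \<open>deg r = 0\<close>.\<close>

lemma kalg_endo_const:
  assumes "kalg_endo \<sigma>"
  shows "\<sigma> [:c:] = [:c:]"
proof -
  have "\<sigma> (smult c 1) = smult c (\<sigma> 1)" and "\<sigma> 1 = 1"
    using assms unfolding kalg_endo_def by blast+
  then show ?thesis by simp
qed

lemma kalg_endo_zero: "kalg_endo \<sigma> \<Longrightarrow> \<sigma> 0 = 0"
  using kalg_endo_const[of \<sigma> 0] by simp

lemma sigma_derivation_const:
  assumes "sigma_derivation \<sigma> \<delta>" and "kalg_endo \<sigma>"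
  shows "\<delta> [:c:] = 0"
proof -
  have "\<delta> (1 * 1) = \<sigma> 1 * \<delta> 1 + \<delta> 1 * 1" and "\<sigma> 1 = 1"
    using assms unfolding sigma_derivation_def kalg_endo_def by blast+
  then have "\<delta> 1 = 0" by (metis add_cancel_right_left mult_1 mult_1_right)
  moreover have "\<delta> (smult c 1) = smult c (\<delta> 1)"
    using assms(1) unfolding sigma_derivation_def by blast
  ultimately show ?thesis by simp
qed

lemma sigma_derivation_zero: "sigma_derivation \<sigma> \<delta> \<Longrightarrow> kalg_endo \<sigma> \<Longrightarrow> \<delta> 0 = 0"
  using sigma_derivation_const[of \<sigma> \<delta> 0] by simp

lemma kalg_endo_eq_pcompose:
  assumes "kalg_endo \<sigma>"
  shows "\<sigma> r = pcompose r (\<sigma> [:0, 1:])"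
proof (induction r)
  case 0
  then show ?case using kalg_endo_zero[OF assms] by simp
next
  case (pCons a p)
  have "\<sigma> ([:a:] + [:0, 1:] * p) = \<sigma> [:a:] + \<sigma> [:0, 1:] * \<sigma> p"
    using assms unfolding kalg_endo_def by metis
  moreover have "[:a:] + [:0, 1:] * p = pCons a p" by simp
  ultimately show ?case
    using pCons kalg_endo_const[OF assms] by (simp add: pcompose_pCons)
qed

lemma degree_kalg_endo_funpow:
  assumes "kalg_endo \<sigma>"
  shows "degree ((\<sigma> ^^ n) r) = degree r * degree (\<sigma> [:0, 1:]) ^ n"
  by (induction n)
    (simp_all add: kalg_endo_eq_pcompose[OF assms, of "(\<sigma> ^^ _) r"] degree_pcompose)

lemma kalg_endo_funpow_fixed_imp_const:
  assumes "kalg_endo \<sigma>" and "degree (\<sigma> [:0, 1:]) > 1" and "n > 0"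
    and "(\<sigma> ^^ n) r = r"
  shows "degree r = 0"
proof (rule ccontr)
  assume "degree r \<noteq> 0"
  moreover have "degree (\<sigma> [:0, 1:]) ^ n > 1"
    using assms(2,3) one_less_power by blast
  ultimately have "degree r < degree r * degree (\<sigma> [:0, 1:]) ^ n" by simp
  also have "\<dots> = degree ((\<sigma> ^^ n) r)"
    by (rule degree_kalg_endo_funpow[OF assms(1), symmetric])
  also have "\<dots> = degree r"
    using assms(4) by simp
  finally show False by simp
qed

context
  fixes \<sigma> \<delta> :: "'a::field poly \<Rightarrow> 'a poly"
  assumes endo: "kalg_endo \<sigma>" and deriv: "sigma_derivation \<sigma> \<delta>"
begin

lemma coeff_ore_x:
  "coeff (ore_x \<sigma> \<delta> Q) j = (case j of 0 \<Rightarrow> 0 | Suc k \<Rightarrow> \<sigma> (coeff Q k)) + \<delta> (coeff Q j)"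
  using kalg_endo_zero[OF endo] sigma_derivation_zero[OF deriv endo]
  by (simp add: ore_x_def coeff_map_poly coeff_pCons split: nat.split)

lemma ore_x_degree_le:
  assumes "degree Q \<le> i"
  shows "degree (ore_x \<sigma> \<delta> Q) \<le> Suc i"
    and "coeff (ore_x \<sigma> \<delta> Q) (Suc i) = \<sigma> (coeff Q i)"
proof -
  have "coeff Q j = 0" if "i < j" for j
    using assms that by (simp add: coeff_eq_0)
  then show "degree (ore_x \<sigma> \<delta> Q) \<le> Suc i"
    using kalg_endo_zero[OF endo] sigma_derivation_zero[OF deriv endo]
    by (intro degree_le) (auto simp: coeff_ore_x split: nat.split)
  show "coeff (ore_x \<sigma> \<delta> Q) (Suc i) = \<sigma> (coeff Q i)"
    using assms sigma_derivation_zero[OF deriv endo] by (simp add: coeff_ore_x coeff_eq_0)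
qed

lemma ore_x_funpow_const:
  "degree ((ore_x \<sigma> \<delta> ^^ i) [:r:]) \<le> i"
  "coeff ((ore_x \<sigma> \<delta> ^^ i) [:r:]) i = (\<sigma> ^^ i) r"
  by (induction i) (simp_all add: ore_x_degree_le)

lemma ore_x_funpow_scalar: "(ore_x \<sigma> \<delta> ^^ i) [:[:c:]:] = monom [:c:] i"
proof (induction i)
  case 0
  then show ?case by (simp add: monom_0)
next
  case (Suc i)
  have "ore_x \<sigma> \<delta> (monom [:c:] i) = monom [:c:] (Suc i)"
    using kalg_endo_const[OF endo, of c] sigma_derivation_const[OF deriv endo, of c]
      kalg_endo_zero[OF endo] sigma_derivation_zero[OF deriv endo]
    by (intro poly_eqI) (simp add: coeff_ore_x coeff_monom split: nat.split)
  then show ?case using Suc by simp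
qed

lemma ore_mult_const_left: "ore_mult \<sigma> \<delta> [:r:] P = smult r P"
  by (simp add: ore_mult_def)

lemma ore_mult_scalar_right: "ore_mult \<sigma> \<delta> P [:[:c:]:] = smult [:c:] P"
proof -
  have "ore_mult \<sigma> \<delta> P [:[:c:]:] = (\<Sum>i\<le>degree P. monom (coeff P i) i * [:[:c:]:])"
    unfolding ore_mult_def ore_x_funpow_scalar
    by (intro sum.cong) (simp_all add: smult_monom mult.commute)
  also have "\<dots> = P * [:[:c:]:]"
    by (simp only: sum_distrib_right[symmetric] poly_as_sum_of_monoms)
  finally show ?thesis by (simp add: mult.commute)
qed

lemma coeff_ore_mult_const_right:
  "coeff (ore_mult \<sigma> \<delta> P [:r:]) (degree P) = lead_coeff P * (\<sigma> ^^ degree P) r"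
proof -
  let ?n = "degree P"
  have "coeff ((ore_x \<sigma> \<delta> ^^ i) [:r:]) ?n = 0" if "i < ?n" for i
    using ore_x_funpow_const(1)[of i r] that by (simp add: coeff_eq_0)
  then have "coeff (ore_mult \<sigma> \<delta> P [:r:]) ?n
      = (\<Sum>i\<in>{?n}. coeff P i * coeff ((ore_x \<sigma> \<delta> ^^ i) [:r:]) ?n)"
    unfolding ore_mult_def coeff_sum coeff_smult
    by (intro sum.mono_neutral_right) auto
  then show ?thesis by (simp add: ore_x_funpow_const(2))
qed

end

theorem lemma2p2:
  fixes \<sigma> \<delta> :: "'a::field poly \<Rightarrow> 'a poly" and P :: "'a poly poly"
  assumes "kalg_endo \<sigma>"
    and "degree (\<sigma> [:0, 1:]) > 1"
    and "sigma_derivation \<sigma> \<delta>"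
    and "degree P > 0"
  shows "ore_centralizer \<sigma> \<delta> P \<inter> range (\<lambda>r. [:r:]) = range (\<lambda>c. [:[:c:]:])"
proof (intro equalityI subsetI)
  fix Q assume "Q \<in> ore_centralizer \<sigma> \<delta> P \<inter> range (\<lambda>r. [:r:])"
  then obtain r where Q: "Q = [:r:]" and commute: "ore_mult \<sigma> \<delta> P [:r:] = smult r P"
    by (auto simp: ore_centralizer_def ore_mult_const_left[OF assms(1,3)])
  have "lead_coeff P * (\<sigma> ^^ degree P) r = lead_coeff P * r"
    using coeff_ore_mult_const_right[OF assms(1,3), of P r]
    by (simp only: commute coeff_smult mult.commute)
  moreover have "lead_coeff P \<noteq> 0" using assms(4) by auto
  ultimately have "(\<sigma> ^^ degree P) r = r" by simp
  then have "degree r = 0"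
    by (rule kalg_endo_funpow_fixed_imp_const[OF assms(1,2,4)])
  then show "Q \<in> range (\<lambda>c. [:[:c:]:])"
    using Q by (auto elim: degree_eq_zeroE)
next
  fix Q :: "'a poly poly" assume "Q \<in> range (\<lambda>c. [:[:c:]:])"
  then show "Q \<in> ore_centralizer \<sigma> \<delta> P \<inter> range (\<lambda>r. [:r:])"
    by (auto simp: ore_centralizer_def ore_mult_const_left[OF assms(1,3)]
        ore_mult_scalar_right[OF assms(1,3)])
qed

end
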